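(* Let $V\in\mathbb{R}^{\ell\times m}$ have rows $v_1,\dots,v_\ell\in\mathbb{R}^m$ and columns $v_{*1},\dots,v_{*m}\in\mathbb{R}^\ell$. Suppose $\|v_i\|_2=1$ for all $i\in[\ell]$, and let $\theta\ge 0$ satisfy $\theta\|v_{*j}\|_1\le 1/3$ for all $j\in[m]$. Then for every $\mu=(\mu_1,\dots,\mu_\ell)\in\mathbb{R}^\ell$ there exists $y\in\mathbb{R}^m$ with $\|y\|_\infty\le 1/3$ and \[|\langle v_i,y\rangle-\mu_i|\ge\theta\quad\text{for all } i\in[\ell].\] *)

theory Defs
  imports "HOL-Analysis.Analysis"
begin

end

theory Submission
  imports Defs
begin

text \<open>Choose signs \<open>\<sigma>\<close> maximising the potential
  \<open>\<theta>/2 \<parallel>\<Sum>\<^sub>k \<sigma>\<^sub>k v\<^sub>k\<parallel>\<^sup>2 - \<Sum>\<^sub>k \<sigma>\<^sub>k \<mu>\<^sub>k\<close>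
  and put \<open>y = \<theta> \<Sum>\<^sub>k \<sigma>\<^sub>k v\<^sub>k\<close>. Flipping the single sign \<open>\<sigma>\<^sub>i\<close> changes the potential by
  \<open>2\<theta>\<parallel>v\<^sub>i\<parallel>\<^sup>2 - 2\<sigma>\<^sub>i(\<langle>v\<^sub>i, y\<rangle> - \<mu>\<^sub>i)\<close>, so maximality gives
  \<open>\<sigma>\<^sub>i(\<langle>v\<^sub>i, y\<rangle> - \<mu>\<^sub>i) \<ge> \<theta>\<parallel>v\<^sub>i\<parallel>\<^sup>2 = \<theta>\<close>. Each coordinate of \<open>y\<close> is a signed sum of
  column entries, hence bounded by \<open>\<theta>\<parallel>v\<^sub>*\<^sub>j\<parallel>\<^sub>1 \<le> 1/3\<close>.\<close>

definition bool_sign :: "bool \<Rightarrow> real"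
  where "bool_sign b = (if b then 1 else -1)"

lemma abs_bool_sign [simp]: "\<bar>bool_sign b\<bar> = 1"
  by (simp add: bool_sign_def)

lemma bool_sign_not: "bool_sign (\<not> b) = - bool_sign b"
  by (simp add: bool_sign_def)

definition signed_sum :: "('l::finite \<Rightarrow> bool) \<Rightarrow> ('l \<Rightarrow> 'a::real_vector) \<Rightarrow> 'a"
  where "signed_sum \<sigma> v = (\<Sum>k\<in>UNIV. bool_sign (\<sigma> k) *\<^sub>R v k)"

definition sign_potential ::
    "real \<Rightarrow> ('l::finite \<Rightarrow> 'a::real_inner) \<Rightarrow> ('l \<Rightarrow> real) \<Rightarrow> ('l \<Rightarrow> bool) \<Rightarrow> real"
  where "sign_potential \<theta> v \<mu> \<sigma> =
    \<theta> / 2 * (norm (signed_sum \<sigma> v))\<^sup>2 - (\<Sum>k\<in>UNIV. bool_sign (\<sigma> k) * \<mu> k)"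

lemma sum_flip_sign:
  fixes f :: "'l::finite \<Rightarrow> 'a::real_vector"
  shows "(\<Sum>k\<in>UNIV. bool_sign ((\<sigma>(i := \<not> \<sigma> i)) k) *\<^sub>R f k)
       = (\<Sum>k\<in>UNIV. bool_sign (\<sigma> k) *\<^sub>R f k) - (2 * bool_sign (\<sigma> i)) *\<^sub>R f i"
proof -
  have "bool_sign ((\<sigma>(i := \<not> \<sigma> i)) k) *\<^sub>R f k
      = bool_sign (\<sigma> k) *\<^sub>R f k - (if k = i then (2 * bool_sign (\<sigma> i)) *\<^sub>R f i else 0)" for k
    by (simp add: bool_sign_not algebra_simps flip: scaleR_2)
  then show ?thesis
    by (simp add: sum_subtractf)
qed

lemma signed_sum_flip:
  "signed_sum (\<sigma>(i := \<not> \<sigma> i)) v = signed_sum \<sigma> v - (2 * bool_sign (\<sigma> i)) *\<^sub>R v i"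
  unfolding signed_sum_def by (rule sum_flip_sign)

lemma sign_potential_flip:
  "sign_potential \<theta> v \<mu> (\<sigma>(i := \<not> \<sigma> i))
     = sign_potential \<theta> v \<mu> \<sigma>
       - 2 * bool_sign (\<sigma> i) * (\<theta> * inner (v i) (signed_sum \<sigma> v) - \<mu> i)
       + 2 * \<theta> * (norm (v i))\<^sup>2"
proof -
  let ?w = "signed_sum \<sigma> v" and ?s = "bool_sign (\<sigma> i)"
  have "?s * ?s = 1"
    by (simp add: bool_sign_def)
  then have norm_flip: "(norm (signed_sum (\<sigma>(i := \<not> \<sigma> i)) v))\<^sup>2
      = (norm ?w)\<^sup>2 - 4 * ?s * inner (v i) ?w + 4 * (norm (v i))\<^sup>2"
    unfolding signed_sum_flip power2_norm_eq_inner
    by (simp add: algebra_simps inner_commute)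
  have target_flip: "(\<Sum>k\<in>UNIV. bool_sign ((\<sigma>(i := \<not> \<sigma> i)) k) * \<mu> k)
      = (\<Sum>k\<in>UNIV. bool_sign (\<sigma> k) * \<mu> k) - 2 * ?s * \<mu> i"
    using sum_flip_sign[of \<sigma> i \<mu>] by simp
  show ?thesis
    unfolding sign_potential_def norm_flip target_flip by (simp add: algebra_simps)
qed

lemma exists_signs_far_from_targets:
  fixes v :: "'l::finite \<Rightarrow> 'a::real_inner" and \<mu> :: "'l \<Rightarrow> real"
  shows "\<exists>\<sigma>. \<forall>i. \<theta> * (norm (v i))\<^sup>2 \<le> \<bar>\<theta> * inner (v i) (signed_sum \<sigma> v) - \<mu> i\<bar>"
proof -
  let ?P = "sign_potential \<theta> v \<mu>"
  have "Max (range ?P) \<in> range ?P"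
    by (rule Max_in) auto
  then obtain \<sigma> where "?P \<sigma> = Max (range ?P)"
    by (metis imageE)
  then have \<sigma>_max: "?P \<tau> \<le> ?P \<sigma>" for \<tau>
    by simp
  have "\<theta> * (norm (v i))\<^sup>2 \<le> \<bar>\<theta> * inner (v i) (signed_sum \<sigma> v) - \<mu> i\<bar>" for i
  proof -
    let ?d = "\<theta> * inner (v i) (signed_sum \<sigma> v) - \<mu> i"
    have "\<theta> * (norm (v i))\<^sup>2 \<le> bool_sign (\<sigma> i) * ?d"
      using \<sigma>_max[of "\<sigma>(i := \<not> \<sigma> i)"] unfolding sign_potential_flip by linarith
    also have "\<dots> \<le> \<bar>bool_sign (\<sigma> i) * ?d\<bar>"
      by (rule abs_ge_self)
    also have "\<dots> = \<bar>?d\<bar>"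
      by (simp add: abs_mult)
    finally show ?thesis .
  qed
  then show ?thesis
    by blast
qed

lemma abs_signed_sum_component_le:
  fixes v :: "'l::finite \<Rightarrow> real ^ 'm"
  shows "\<bar>signed_sum \<sigma> v $ j\<bar> \<le> (\<Sum>k\<in>UNIV. \<bar>v k $ j\<bar>)"
proof -
  have "\<bar>signed_sum \<sigma> v $ j\<bar> = \<bar>\<Sum>k\<in>UNIV. bool_sign (\<sigma> k) * v k $ j\<bar>"
    by (simp add: signed_sum_def)
  also have "\<dots> \<le> (\<Sum>k\<in>UNIV. \<bar>bool_sign (\<sigma> k) * v k $ j\<bar>)"
    by (rule sum_abs)
  finally show ?thesis
    by (simp add: abs_mult)
qed

theorem mainTheorem4:
  fixes V :: "real ^ 'm ^ 'l" and \<theta> :: real and \<mu> :: "real ^ 'l"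
  assumes rows_unit: "\<forall>i. norm (V $ i) = 1"
    and theta_nonneg: "\<theta> \<ge> 0"
    and cols: "\<forall>j. \<theta> * (\<Sum>i\<in>UNIV. \<bar>V $ i $ j\<bar>) \<le> 1/3"
  shows "\<exists>y :: real ^ 'm. (\<forall>j. \<bar>y $ j\<bar> \<le> 1/3) \<and>
           (\<forall>i. \<bar>inner (V $ i) y - \<mu> $ i\<bar> \<ge> \<theta>)"
proof -
  obtain \<sigma> where far: "\<And>i. \<theta> * (norm (V $ i))\<^sup>2
      \<le> \<bar>\<theta> * inner (V $ i) (signed_sum \<sigma> (($) V)) - \<mu> $ i\<bar>"
    using exists_signs_far_from_targets[of \<theta> "($) V" "($) \<mu>"] by blast
  define y where "y = \<theta> *\<^sub>R signed_sum \<sigma> (($) V)"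
  have "\<bar>y $ j\<bar> \<le> 1/3" for j
  proof -
    have "\<bar>y $ j\<bar> \<le> \<theta> * (\<Sum>i\<in>UNIV. \<bar>V $ i $ j\<bar>)"
      using abs_signed_sum_component_le[of \<sigma> "($) V" j] theta_nonneg
      by (simp add: y_def abs_mult mult_left_mono)
    with cols show ?thesis
      by (meson order_trans)
  qed
  moreover have "\<bar>inner (V $ i) y - \<mu> $ i\<bar> \<ge> \<theta>" for i
    using far[of i] rows_unit by (simp add: y_def)
  ultimately show ?thesis
    by blast
qed

end
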